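(* For every $m\in\mathbb N$ and every choice of $A_\ell$, $J_\ell$, $\ell=1,\ldots,m$, as in the context, and every $n\in\mathbb N$, \[\left|\mathbb P\left(\bigcap_{\ell=1}^m\mathscr W_{J_{n,\ell}}\left(A^{(q_n)}_{n,\ell}\right)\right)-\mathbb P\left(\bigcap_{\ell=1}^m\mathscr W_{J_{n,\ell}}\left(A_{n,\ell}\right)\right)\right|\leq q_n\sum_{\ell=1}^m\mathbb P(A_{n,\ell}).\]
   Context: Let $\mathbf X_0,\mathbf X_1,\ldots$ be a stationary sequence of random vectors in $\mathcal V=\mathbb R^d$, identified with the coordinate process on $(\mathcal V^{\mathbb N_0},\mathcal B^{\mathbb N_0},\mathbb P)$, with $\sigma$ the (measure-preserving) left shift $\sigma((x_i)_i)=(x_{i+1})_i$. Let $u_n:(0,\infty)\to(0,\infty)$ be normalising threshold functions (nonincreasing, left continuous, with $n\mathbb P(\|\mathbf X_0\|>u_n(\tau))\to\tau$ for every $\tau>0$), and set $u_n^{-1}(z)=\sup\{\tau>0: z\le u_n(\tau)\}$. Let $(k_n)$, $(t_n)$, $(q_n)$ be sequences of positive integers with $k_n,t_n\to\infty$, $k_nt_n=o(n)$, $r_n:=\lfloor n/k_n\rfloor\to\infty$ and $q_n=o(r_n)$. For an event $A$ and an interval $J\subset[0,\infty)$ let $\mathscr W_J(A)=\bigcap_{i\in J\cap\mathbb N_0}\sigma^{-i}(A^c)$ (no occurrence of $A$ at times in $J$), and for $j\in\mathbb N$ let $A^{(j)}=A\cap\sigma^{-1}(A^c)\cap\cdots\cap\sigma^{-j}(A^c)$.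 Let $\mathscr F$ be the field of cylinder sets $\{(x_j)_j: x_j\in H_j,\ j=0,\ldots,m\}$ with $H_j$ Borel in $\mathcal V$, $m\in\mathbb N$. For $\ell=1,\ldots,m$ take $A_\ell\in\mathscr F$ and $J_\ell=[a_\ell,b_\ell)$ with $0\le a_1<b_1\le a_2<\cdots\le a_m<b_m\le1$, and define $J_{n,\ell}=\big[(\lceil k_na_\ell\rceil-1)r_n,(\lfloor k_nb_\ell\rfloor+1)r_n\big)$ and $A_{n,\ell}=\left\{\left(u_n^{-1}(\|\mathbf X_j\|)\frac{\mathbf X_j}{\|\mathbf X_j\|}\right)_j\in A_\ell\right\}$, with $A^{(q_n)}_{n,\ell}=(A_{n,\ell})^{(q_n)}$. *)

theory Defs
  imports "HOL-Probability.Probability"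
begin

definition shiftn :: "nat \<Rightarrow> (nat \<Rightarrow> 'a) \<Rightarrow> nat \<Rightarrow> 'a" where
  "shiftn i x = (\<lambda>j. x (j + i))"

definition no_occ :: "nat set \<Rightarrow> (nat \<Rightarrow> 'a) set \<Rightarrow> (nat \<Rightarrow> 'a) set" where
  "no_occ J A = (\<Inter>i\<in>J. {x. shiftn i x \<in> - A})"

definition run_end :: "nat \<Rightarrow> (nat \<Rightarrow> 'a) set \<Rightarrow> (nat \<Rightarrow> 'a) set" where
  "run_end j A = A \<inter> (\<Inter>i\<in>{1..j}. {x. shiftn i x \<in> - A})"

definition rect_cyl :: "(nat \<Rightarrow> 'a::topological_space) set set" where
  "rect_cyl = {{x. \<forall>j\<le>m. x j \<in> H j} | m H. \<forall>j. H j \<in> sets borel}"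

definition cyl_field :: "(nat \<Rightarrow> 'a::topological_space) set set" where
  "cyl_field = \<Inter>{M. algebra UNIV M \<and> rect_cyl \<subseteq> M}"

definition gen_inv :: "(real \<Rightarrow> real) \<Rightarrow> real \<Rightarrow> real" where
  "gen_inv u z = Sup {\<tau>. \<tau> > 0 \<and> z \<le> u \<tau>}"

definition transf_event :: "(real \<Rightarrow> real) \<Rightarrow> (nat \<Rightarrow> 'a::real_normed_vector) set \<Rightarrow> (nat \<Rightarrow> 'a) set" where
  "transf_event u A = {x. (\<lambda>j. gen_inv u (norm (x j)) *\<^sub>R (x j /\<^sub>R norm (x j))) \<in> A}"

definition block_times :: "nat \<Rightarrow> nat \<Rightarrow> real \<Rightarrow> real \<Rightarrow> nat set" where
  "block_times k r a b = {i. (\<lceil>real k * a\<rceil> - 1) * int r \<le> int i \<and> int i < (\<lfloor>real k * b\<rfloor> + 1) * int r}"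

end

theory Submission
  imports Defs
begin

text \<open>Every occurrence of A^(q) is an occurrence of A, so the difference of the two probabilities
is the probability that every block J avoids A^(q) while some block contains an occurrence of A.
The last occurrence of A in such a block is followed by q non-occurrences unless it lies among
the last q times of J; as it is not an occurrence of A^(q), it must lie there. The union bound
over these q times and stationarity give at most q P(A) per block.\<close>

lemma borel_measurable_gen_inv:
  fixes f :: "real \<Rightarrow> real"
  assumes antimono: "\<And>\<tau> \<tau>'. 0 < \<tau> \<Longrightarrow> \<tau> \<le> \<tau>' \<Longrightarrow> f \<tau>' \<le> f \<tau>"
  shows "gen_inv f \<in> borel_measurable borel"
proof -
  let ?S = "\<lambda>z. {\<tau>. \<tau> > 0 \<and> z \<le> f \<tau>}"
  \<comment> \<open>On D and E the set under the Sup is unbounded resp. empty, where Sup takes junk values;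
    only on Mid is it nonempty and bounded, and there gen_inv is antitone.\<close>
  define D where "D = {z. \<forall>\<tau>>0. z \<le> f \<tau>}"
  define E where "E = {z. \<forall>\<tau>>0. f \<tau> < z}"
  define Mid where "Mid = {z. \<exists>\<tau>>0. f \<tau> < z} \<inter> {z. \<exists>\<tau>>0. z \<le> f \<tau>}"
  have "is_interval D" "is_interval E" "is_interval Mid"
    unfolding D_def E_def Mid_def
    by (auto simp: is_interval_1 intro!: is_interval_Int; fastforce)+
  then have borel: "C \<in> sets borel" if "C \<in> {D, E, Mid}" for C
    using that real_interval_borel_measurable by blast
  have "mono_on C (\<lambda>z. - gen_inv f z)" if "C \<in> {D, E, Mid}" for C
  proof -
    have "gen_inv f z = Sup {0<..}" if "z \<in> D" for z
      using that unfolding D_def gen_inv_def by (intro arg_cong[where f = Sup]) auto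
    then have "mono_on D (\<lambda>z. - gen_inv f z)"
      by (simp add: mono_on_def)
    moreover have "gen_inv f z = Sup {}" if "z \<in> E" for z
      using that unfolding E_def gen_inv_def by (intro arg_cong[where f = Sup]) force
    then have "mono_on E (\<lambda>z. - gen_inv f z)"
      by (simp add: mono_on_def)
    moreover have "mono_on Mid (\<lambda>z. - gen_inv f z)"
    proof (rule mono_onI)
      fix z z' assume z: "z \<in> Mid" "z' \<in> Mid" "z \<le> z'"
      then obtain \<tau>\<^sub>0 where \<tau>\<^sub>0: "\<tau>\<^sub>0 > 0" "f \<tau>\<^sub>0 < z" unfolding Mid_def by auto
      have "\<tau> \<le> \<tau>\<^sub>0" if "\<tau> \<in> ?S z" for \<tau>
        using antimono[of \<tau>\<^sub>0 \<tau>] \<tau>\<^sub>0 that by force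
      then have "bdd_above (?S z)" by (rule bdd_aboveI)
      moreover have "?S z' \<noteq> {}" using z(2) unfolding Mid_def by auto
      ultimately have "Sup (?S z') \<le> Sup (?S z)"
        using z(3) by (intro cSup_subset_mono) auto
      then show "- gen_inv f z \<le> - gen_inv f z'" by (simp add: gen_inv_def)
    qed
    ultimately show ?thesis using that by blast
  qed
  moreover have "\<Union>{D, E, Mid} = UNIV"
    unfolding D_def E_def Mid_def by (auto simp: not_less)
  ultimately have "(\<lambda>z. - gen_inv f z) \<in> borel_measurable borel"
    using borel by (intro borel_measurable_piecewise_mono[of "{D, E, Mid}"]) auto
  from borel_measurable_uminus[OF this] show ?thesis by simp
qed

lemma space_PiM_borel: "space (PiM UNIV (\<lambda>_. borel :: 'a::topological_space measure)) = UNIV"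
  by (simp add: space_PiM PiE_UNIV_domain)

lemma cyl_field_subset_sets_PiM: "cyl_field \<subseteq> sets (PiM UNIV (\<lambda>_. borel :: 'a::topological_space measure))"
proof -
  let ?M = "PiM UNIV (\<lambda>_. borel :: 'a measure)"
  have "algebra UNIV (sets ?M)"
    using sets.algebra_axioms[of ?M] by (simp add: space_PiM_borel)
  moreover have "rect_cyl \<subseteq> sets ?M"
  proof
    fix S :: "(nat \<Rightarrow> 'a) set" assume "S \<in> rect_cyl"
    then obtain m H where S: "S = {x. \<forall>j\<le>m. x j \<in> H j}" and H: "\<forall>j. H j \<in> sets borel"
      unfolding rect_cyl_def by auto
    have "S = (\<Inter>j\<le>m. (\<lambda>x. x j) -` H j \<inter> space ?M)"
      unfolding S space_PiM_borel by auto
    also have "\<dots> \<in> sets ?M"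
      using H by (intro sets.finite_INT) (auto intro: measurable_sets measurable_component_singleton)
    finally show "S \<in> sets ?M" .
  qed
  ultimately show ?thesis unfolding cyl_field_def by blast
qed

lemma sets_transf_event:
  fixes A :: "(nat \<Rightarrow> 'a::{real_normed_vector, second_countable_topology}) set"
  assumes "gen_inv u \<in> borel_measurable borel" and "A \<in> sets (PiM UNIV (\<lambda>_. borel))"
  shows "transf_event u A \<in> sets (PiM UNIV (\<lambda>_. borel))"
proof -
  let ?M = "PiM UNIV (\<lambda>_. borel :: 'a measure)"
  let ?g = "\<lambda>v::'a. gen_inv u (norm v) *\<^sub>R (v /\<^sub>R norm v)"
  have "?g \<in> borel_measurable borel" using assms(1) by measurable
  then have "(\<lambda>x j. ?g (x j)) \<in> ?M \<rightarrow>\<^sub>M ?M"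
    by (intro measurable_PiM_single') (auto simp: space_PiM_borel intro: measurable_compose[OF measurable_component_singleton])
  from measurable_sets[OF this assms(2)] show ?thesis
    by (simp add: transf_event_def vimage_def space_PiM_borel)
qed

lemma shiftn_shiftn: "shiftn s (shiftn i x) = shiftn (i + s) x"
  unfolding shiftn_def by (simp add: ac_simps)

lemma measurable_shiftn: "shiftn i \<in> PiM UNIV (\<lambda>_. M) \<rightarrow>\<^sub>M PiM UNIV (\<lambda>_. M)"
  unfolding shiftn_def by (rule measurable_PiM_single') (auto simp: space_PiM)

lemma block_times_eq_atLeastLessThan:
  "block_times k r a b = {nat ((\<lceil>real k * a\<rceil> - 1) * int r) ..< nat ((\<lfloor>real k * b\<rfloor> + 1) * int r)}"
  unfolding block_times_def by auto

lemma no_occ_antimono: "A \<subseteq> B \<Longrightarrow> no_occ J B \<subseteq> no_occ J A"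
  unfolding no_occ_def by auto

lemma run_end_subset: "run_end q B \<subseteq> B"
  unfolding run_end_def by auto

lemma no_occ_run_end_diff_subset:
  "no_occ {lo..<hi} (run_end q B) - no_occ {lo..<hi} B \<subseteq> (\<Union>i\<in>{hi - q..<hi}. shiftn i -` B)"
proof
  fix x assume x: "x \<in> no_occ {lo..<hi} (run_end q B) - no_occ {lo..<hi} B"
  define K where "K = {i\<in>{lo..<hi}. shiftn i x \<in> B}"
  define i\<^sub>0 where "i\<^sub>0 = Max K"
  have "finite K" "K \<noteq> {}" using x unfolding K_def no_occ_def by auto
  then have i\<^sub>0: "i\<^sub>0 \<in> K" and i\<^sub>0_max: "\<And>i. i \<in> K \<Longrightarrow> i \<le> i\<^sub>0"
    unfolding i\<^sub>0_def by auto
  have "hi - q \<le> i\<^sub>0"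
  proof (rule ccontr)
    assume late: "\<not> hi - q \<le> i\<^sub>0"
    have "shiftn s (shiftn i\<^sub>0 x) \<notin> B" if "s \<in> {1..q}" for s
    proof -
      have "i\<^sub>0 + s < hi" using late that by auto
      then show ?thesis
        using i\<^sub>0_max[of "i\<^sub>0 + s"] i\<^sub>0 that by (auto simp: K_def shiftn_shiftn)
    qed
    then have "shiftn i\<^sub>0 x \<in> run_end q B"
      using i\<^sub>0 unfolding K_def run_end_def by (auto simp: shiftn_shiftn)
    then show False using x i\<^sub>0 unfolding K_def no_occ_def by auto
  qed
  then show "x \<in> (\<Union>i\<in>{hi - q..<hi}. shiftn i -` B)"
    using i\<^sub>0 unfolding K_def by auto
qed

locale stationary_sequence = prob_space P for P :: "(nat \<Rightarrow> 'a::topological_space) measure" +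
  assumes sets_eq: "sets P = sets (PiM UNIV (\<lambda>_. borel))"
    and stationary: "distr P P (shiftn 1) = P"
begin

lemma space_eq: "space P = UNIV"
  using sets_eq_imp_space_eq[OF sets_eq] by (simp add: space_PiM_borel)

lemma shiftn_measurable: "shiftn i \<in> P \<rightarrow>\<^sub>M P"
  using measurable_shiftn measurable_cong_sets[OF sets_eq sets_eq] by blast

lemma distr_shiftn: "distr P P (shiftn i) = P"
proof (induction i)
  case 0
  have "shiftn 0 = (\<lambda>x :: nat \<Rightarrow> 'a. x)" by (simp add: shiftn_def fun_eq_iff)
  then show ?case by (simp add: distr_id)
next
  case (Suc i)
  have "shiftn (Suc i) = shiftn i \<circ> shiftn 1"
    by (auto simp: shiftn_shiftn)
  then show ?case
    using distr_distr[OF shiftn_measurable shiftn_measurable] stationary Suc.IH by metis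
qed

lemma measure_shiftn_vimage: "B \<in> sets P \<Longrightarrow> measure P (shiftn i -` B) = measure P B"
  using measure_distr[OF shiftn_measurable[of i]] by (simp add: distr_shiftn space_eq)

lemma sets_shiftn_vimage: "B \<in> sets P \<Longrightarrow> shiftn i -` B \<in> sets P"
  using measurable_sets[OF shiftn_measurable, of B i] by (simp add: space_eq)

lemma sets_no_occ: "B \<in> sets P \<Longrightarrow> no_occ J B \<in> sets P"
proof -
  assume "B \<in> sets P"
  then have "(\<Inter>i\<in>J. shiftn i -` (space P - B)) \<in> sets P"
    by (intro sets.countable_INT'') (auto simp: space_eq[symmetric] sets_shiftn_vimage)
  then show ?thesis by (simp add: no_occ_def space_eq vimage_def Compl_eq_Diff_UNIV)
qed

lemma sets_run_end: "B \<in> sets P \<Longrightarrow> run_end j B \<in> sets P"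
proof -
  assume "B \<in> sets P"
  then have "B \<inter> (\<Inter>i\<in>{1..j}. shiftn i -` (space P - B)) \<in> sets P"
    by (intro sets.Int sets.countable_INT'') (auto simp: space_eq[symmetric] sets_shiftn_vimage)
  then show ?thesis by (simp add: run_end_def space_eq vimage_def Compl_eq_Diff_UNIV)
qed

lemma measure_no_occ_run_end_diff_le:
  assumes "finite L" and B: "\<And>l. l \<in> L \<Longrightarrow> B l \<in> sets P"
  shows "\<bar>measure P (\<Inter>l\<in>L. no_occ {lo l..<hi l} (run_end q (B l)))
          - measure P (\<Inter>l\<in>L. no_occ {lo l..<hi l} (B l))\<bar>
         \<le> real q * (\<Sum>l\<in>L. measure P (B l))"
proof -
  define X where "X = (\<Inter>l\<in>L. no_occ {lo l..<hi l} (run_end q (B l)))"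
  define Y where "Y = (\<Inter>l\<in>L. no_occ {lo l..<hi l} (B l))"
  have X: "X \<in> sets P" unfolding X_def using assms
    by (intro sets.countable_INT'') (auto simp: space_eq[symmetric] countable_finite sets_no_occ sets_run_end)
  have Y: "Y \<in> sets P" unfolding Y_def using assms
    by (intro sets.countable_INT'') (auto simp: space_eq[symmetric] countable_finite sets_no_occ)
  have "Y \<subseteq> X"
    unfolding X_def Y_def using no_occ_antimono[OF run_end_subset] by blast
  have "X - Y \<subseteq> (\<Union>l\<in>L. no_occ {lo l..<hi l} (run_end q (B l)) - no_occ {lo l..<hi l} (B l))"
    unfolding X_def Y_def by blast
  also have "\<dots> \<subseteq> (\<Union>l\<in>L. \<Union>i\<in>{hi l - q..<hi l}. shiftn i -` B l)"
    by (intro UN_mono order.refl no_occ_run_end_diff_subset)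
  finally have diff_subset: "X - Y \<subseteq> (\<Union>l\<in>L. \<Union>i\<in>{hi l - q..<hi l}. shiftn i -` B l)" .
  have shifted: "shiftn i -` B l \<in> sets P" if "l \<in> L" for i l
    using B[OF that] by (rule sets_shiftn_vimage)
  have "measure P X - measure P Y = measure P (X - Y)"
    using finite_measure_Diff[OF X Y \<open>Y \<subseteq> X\<close>] by simp
  also have "\<dots> \<le> measure P (\<Union>l\<in>L. \<Union>i\<in>{hi l - q..<hi l}. shiftn i -` B l)"
    using diff_subset \<open>finite L\<close> shifted by (intro finite_measure_mono sets.finite_UN) auto
  also have "\<dots> \<le> (\<Sum>l\<in>L. measure P (\<Union>i\<in>{hi l - q..<hi l}. shiftn i -` B l))"
    using \<open>finite L\<close> shifted by (intro measure_UNION_le sets.finite_UN) auto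
  also have "\<dots> \<le> (\<Sum>l\<in>L. \<Sum>i\<in>{hi l - q..<hi l}. measure P (shiftn i -` B l))"
    using shifted by (intro sum_mono measure_UNION_le) auto
  also have "\<dots> = (\<Sum>l\<in>L. real (card {hi l - q..<hi l}) * measure P (B l))"
    using B by (simp add: measure_shiftn_vimage)
  also have "\<dots> \<le> real q * (\<Sum>l\<in>L. measure P (B l))"
    unfolding sum_distrib_left by (intro sum_mono mult_right_mono) auto
  finally show ?thesis
    using finite_measure_mono[OF \<open>Y \<subseteq> X\<close> X] unfolding X_def Y_def by linarith
qed

end

theorem proposition3p11:
  fixes P :: "(nat \<Rightarrow> 'a::euclidean_space) measure"
    and u :: "nat \<Rightarrow> real \<Rightarrow> real"
    and k t q :: "nat \<Rightarrow> nat"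
    and m n :: nat
    and A :: "nat \<Rightarrow> (nat \<Rightarrow> 'a) set"
    and a b :: "nat \<Rightarrow> real"
  assumes prob: "prob_space P"
    and sets_P: "sets P = sets (PiM UNIV (\<lambda>_. borel))"
    and stationary: "distr P P (shiftn 1) = P"
    and u_pos: "\<And>n \<tau>. \<tau> > 0 \<Longrightarrow> u n \<tau> > 0"
    and u_mono: "\<And>n \<tau> \<tau>'. 0 < \<tau> \<Longrightarrow> \<tau> \<le> \<tau>' \<Longrightarrow> u n \<tau>' \<le> u n \<tau>"
    and u_lcont: "\<And>n \<tau>. \<tau> > 0 \<Longrightarrow> continuous (at_left \<tau>) (u n)"
    and u_norm: "\<And>\<tau>. \<tau> > 0 \<Longrightarrow>
        (\<lambda>n. real n * measure P {x. norm (x 0) > u n \<tau>}) \<longlonglongrightarrow> \<tau>"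
    and k_pos: "\<And>n. k n > 0" and t_pos: "\<And>n. t n > 0" and q_pos: "\<And>n. q n > 0"
    and k_lim: "filterlim k at_top sequentially"
    and t_lim: "filterlim t at_top sequentially"
    and kt_small: "(\<lambda>n. real (k n * t n) / real n) \<longlonglongrightarrow> 0"
    and r_lim: "filterlim (\<lambda>n. n div k n) at_top sequentially"
    and q_small: "(\<lambda>n. real (q n) / real (n div k n)) \<longlonglongrightarrow> 0"
    and m_pos: "m \<ge> 1"
    and A_field: "\<And>l. l \<in> {1..m} \<Longrightarrow> A l \<in> cyl_field"
    and a_first: "0 \<le> a 1"
    and ab: "\<And>l. l \<in> {1..m} \<Longrightarrow> a l < b l"
    and ba: "\<And>l. l \<in> {1..<m} \<Longrightarrow> b l \<le> a (Suc l)"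
    and b_last: "b m \<le> 1"
    and n_pos: "n \<ge> 1"
  shows "\<bar>measure P (\<Inter>l\<in>{1..m}. no_occ (block_times (k n) (n div k n) (a l) (b l))
                                  (run_end (q n) (transf_event (u n) (A l))))
         - measure P (\<Inter>l\<in>{1..m}. no_occ (block_times (k n) (n div k n) (a l) (b l))
                                  (transf_event (u n) (A l)))\<bar>
         \<le> real (q n) * (\<Sum>l=1..m. measure P (transf_event (u n) (A l)))"
proof -
  \<comment> \<open>The bound is non-asymptotic: beyond stationarity and measurability it needs only the
    monotonicity of u n.\<close>
  interpret stationary_sequence P
    using prob sets_P stationary by (simp add: stationary_sequence_def stationary_sequence_axioms_def)
  have "transf_event (u n) (A l) \<in> sets P" if "l \<in> {1..m}" for l
    using A_field[OF that] cyl_field_subset_sets_PiM borel_measurable_gen_inv[OF u_mono]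
    by (auto simp: sets_P intro!: sets_transf_event)
  then show ?thesis
    unfolding block_times_eq_atLeastLessThan by (intro measure_no_occ_run_end_diff_le) simp_all
qed

end
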